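(* For every graph $G$, $mw(G) \leq pw(G)+1$, where $mw(G)$ is the matching width and $pw(G)$ the pathwidth of $G$.
   Context: For a permutation $SV=(v_1,\dots,v_n)$ of $V(G)$ and $1\le i\le n$, let $V_i=\{v_1,\dots,v_i\}$ and let $G_i$ be the graph on $V(G)$ whose edges are the edges of $G$ with one end in $V_i$ and the other in $V(G)\setminus V_i$. The matching width of $SV$ is $\max_i \nu(G_i)$, where $\nu$ denotes maximum matching size, and the matching width $mw(G)$ is the minimum of this quantity over all permutations $SV$ of $V(G)$. Pathwidth is the standard notion (minimum over path decompositions of the maximum bag size minus one). *)

theory Defs
  imports Main
begin

definition graph :: "'a set \<Rightarrow> 'a set set \<Rightarrow> bool" where
  "graph V E \<longleftrightarrow> finite V \<and> (\<forall>e\<in>E. \<exists>u v. e = {u, v} \<and> u \<noteq> v \<and> u \<in> V \<and> v \<in> V)"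

definition matching :: "'a set set \<Rightarrow> 'a set set \<Rightarrow> bool" where
  "matching E M \<longleftrightarrow> M \<subseteq> E \<and> (\<forall>e\<in>M. \<forall>f\<in>M. e \<noteq> f \<longrightarrow> e \<inter> f = {})"

definition nu :: "'a set set \<Rightarrow> nat" where
  "nu E = Max {card M | M. matching E M}"

definition cut_edges :: "'a set set \<Rightarrow> 'a set \<Rightarrow> 'a set set" where
  "cut_edges E S = {e \<in> E. \<exists>u v. e = {u, v} \<and> u \<in> S \<and> v \<notin> S}"

text \<open>A permutation of V is a distinct list enumerating V; V_i = set (take i vs).\<close>
definition vertex_ordering :: "'a set \<Rightarrow> 'a list \<Rightarrow> bool" where
  "vertex_ordering V vs \<longleftrightarrow> distinct vs \<and> set vs = V"

definition mw_of_ordering :: "'a set set \<Rightarrow> 'a list \<Rightarrow> nat" where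
  "mw_of_ordering E vs = Max {nu (cut_edges E (set (take i vs))) | i. i \<le> length vs}"

definition matching_width :: "'a set \<Rightarrow> 'a set set \<Rightarrow> nat" where
  "matching_width V E = (LEAST k. \<exists>vs. vertex_ordering V vs \<and> mw_of_ordering E vs = k)"

definition path_decomposition :: "'a set \<Rightarrow> 'a set set \<Rightarrow> 'a set list \<Rightarrow> bool" where
  "path_decomposition V E Bs \<longleftrightarrow>
     Bs \<noteq> [] \<and> (\<forall>B\<in>set Bs. B \<subseteq> V) \<and>
     (\<forall>v\<in>V. \<exists>B\<in>set Bs. v \<in> B) \<and>
     (\<forall>e\<in>E. \<exists>B\<in>set Bs. e \<subseteq> B) \<and>
     (\<forall>i j k. i \<le> j \<and> j \<le> k \<and> k < length Bs \<longrightarrow> Bs ! i \<inter> Bs ! k \<subseteq> Bs ! j)"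

definition pd_width :: "'a set list \<Rightarrow> int" where
  "pd_width Bs = int (Max (card ` set Bs)) - 1"

definition pathwidth :: "'a set \<Rightarrow> 'a set set \<Rightarrow> int" where
  "pathwidth V E = (LEAST k. \<exists>Bs. path_decomposition V E Bs \<and> pd_width Bs = k)"

end

theory Submission
  imports Defs
begin

text \<open>Order the vertices by the index of the first bag containing them. For a prefix \<open>S\<close> of this
  order let \<open>j\<close> be the largest first-bag index occurring in \<open>S\<close>. A cut edge \<open>{u, w}\<close> with
  \<open>u \<in> S\<close> lies in some bag \<open>t\<close>, and \<open>first_bag u \<le> j \<le> first_bag w \<le> t\<close>; by the interpolation
  property of path decompositions \<open>u\<close> lies in bag \<open>j\<close>. Hence every matching of the cut injects into
  bag \<open>j\<close>, whose size is at most \<open>pw(G) + 1\<close>.\<close>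

lemma graph_edge_subset:
  assumes "graph V E" "e \<in> E"
  shows "e \<subseteq> V"
proof -
  obtain u v where "e = {u, v}" "u \<in> V" "v \<in> V"
    using assms unfolding graph_def by auto
  then show ?thesis by simp
qed

lemma graph_finite_vertices: "graph V E \<Longrightarrow> finite V"
  unfolding graph_def by simp

lemma graph_finite_edges:
  assumes "graph V E"
  shows "finite E"
proof -
  have "E \<subseteq> Pow V" using graph_edge_subset[OF assms] by blast
  with graph_finite_vertices[OF assms] show ?thesis by (simp add: finite_subset)
qed

lemma nu_le:
  assumes "finite E" "\<And>M. matching E M \<Longrightarrow> card M \<le> K"
  shows "nu E \<le> K"
proof -
  have "{M. matching E M} \<subseteq> Pow E" unfolding matching_def by blast
  then have "finite {M. matching E M}" using assms(1) by (meson finite_Pow_iff finite_subset)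
  moreover have "matching E {}" unfolding matching_def by blast
  ultimately show ?thesis
    unfolding nu_def using assms(2) by (subst Max_le_iff) auto
qed

lemma matching_disjoint:
  "matching E M \<Longrightarrow> e \<in> M \<Longrightarrow> f \<in> M \<Longrightarrow> e \<noteq> f \<Longrightarrow> e \<inter> f = {}"
  unfolding matching_def by blast

lemma card_matching_le_card_cover:
  assumes "matching E M" "finite C" "\<And>e. e \<in> M \<Longrightarrow> e \<inter> C \<noteq> {}"
  shows "card M \<le> card C"
proof -
  define pick where "pick e = (SOME u. u \<in> e \<inter> C)" for e
  have pick: "pick e \<in> e \<inter> C" if "e \<in> M" for e
    unfolding pick_def some_in_eq using assms(3)[OF that] .
  have "inj_on pick M"
  proof
    fix e f assume "e \<in> M" "f \<in> M" "pick e = pick f"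
    then have "pick e \<in> e \<inter> f" using pick[of e] pick[of f] by simp
    then show "e = f"
      using matching_disjoint[OF assms(1) \<open>e \<in> M\<close> \<open>f \<in> M\<close>] by blast
  qed
  moreover have "pick ` M \<subseteq> C" using pick by auto
  ultimately show ?thesis using assms(2) by (rule card_inj_on_le)
qed

lemma mw_of_ordering_le:
  assumes "\<And>i. i \<le> length vs \<Longrightarrow> nu (cut_edges E (set (take i vs))) \<le> K"
  shows "mw_of_ordering E vs \<le> K"
proof -
  have "{nu (cut_edges E (set (take i vs))) | i. i \<le> length vs}
      = (\<lambda>i. nu (cut_edges E (set (take i vs)))) ` {..length vs}" by auto
  then show ?thesis
    unfolding mw_of_ordering_def by (simp only:) (rule Max.boundedI, use assms in auto)
qed

lemma path_decomposition_single_bag: "graph V E \<Longrightarrow> path_decomposition V E [V]"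
  unfolding path_decomposition_def using graph_edge_subset by (auto simp: le_Suc_eq)

lemma path_decomposition_bag_subset:
  "path_decomposition V E Bs \<Longrightarrow> j < length Bs \<Longrightarrow> Bs ! j \<subseteq> V"
  unfolding path_decomposition_def by simp

lemma path_decomposition_edge_in_bag:
  "path_decomposition V E Bs \<Longrightarrow> e \<in> E \<Longrightarrow> \<exists>t < length Bs. e \<subseteq> Bs ! t"
  unfolding path_decomposition_def by (metis in_set_conv_nth)

lemma path_decomposition_interpolation:
  "path_decomposition V E Bs \<Longrightarrow> i \<le> j \<Longrightarrow> j \<le> k \<Longrightarrow> k < length Bs
    \<Longrightarrow> Bs ! i \<inter> Bs ! k \<subseteq> Bs ! j"
  unfolding path_decomposition_def by blast

definition first_bag :: "'a set list \<Rightarrow> 'a \<Rightarrow> nat" where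
  "first_bag Bs v = (LEAST j. j < length Bs \<and> v \<in> Bs ! j)"

lemma first_bag:
  assumes "t < length Bs" "v \<in> Bs ! t"
  shows "first_bag Bs v \<le> t" "first_bag Bs v < length Bs" "v \<in> Bs ! first_bag Bs v"
proof -
  have "first_bag Bs v < length Bs \<and> v \<in> Bs ! first_bag Bs v"
    unfolding first_bag_def by (rule LeastI[of _ t]) (use assms in simp)
  then show "first_bag Bs v < length Bs" "v \<in> Bs ! first_bag Bs v" by auto
  show "first_bag Bs v \<le> t" unfolding first_bag_def by (rule Least_le) (use assms in simp)
qed

lemma first_bag_less_length:
  assumes "path_decomposition V E Bs" "v \<in> V"
  shows "first_bag Bs v < length Bs"
proof -
  obtain t where "t < length Bs" "v \<in> Bs ! t"
    using assms unfolding path_decomposition_def by (metis in_set_conv_nth)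
  then show ?thesis by (rule first_bag(2))
qed

lemma bag_contains_cut_endpoint:
  assumes pd: "path_decomposition V E Bs" and "{u, w} \<in> E"
    and u: "first_bag Bs u \<le> j" and w: "j \<le> first_bag Bs w"
  shows "u \<in> Bs ! j"
proof -
  obtain t where t: "t < length Bs" "{u, w} \<subseteq> Bs ! t"
    using path_decomposition_edge_in_bag[OF pd \<open>{u, w} \<in> E\<close>] by blast
  then have "u \<in> Bs ! t" "w \<in> Bs ! t" by auto
  have "j \<le> t" using w first_bag(1)[OF t(1) \<open>w \<in> Bs ! t\<close>] by (rule le_trans)
  have "Bs ! first_bag Bs u \<inter> Bs ! t \<subseteq> Bs ! j"
    by (rule path_decomposition_interpolation[OF pd u \<open>j \<le> t\<close> t(1)])
  moreover have "u \<in> Bs ! first_bag Bs u" by (rule first_bag(3)[OF t(1) \<open>u \<in> Bs ! t\<close>])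
  ultimately show ?thesis using \<open>u \<in> Bs ! t\<close> by blast
qed

lemma card_cut_matching_le_bag:
  assumes g: "graph V E" and pd: "path_decomposition V E Bs" and "j < length Bs"
    and below: "\<forall>u\<in>S. first_bag Bs u \<le> j" and above: "\<forall>w\<in>V - S. j \<le> first_bag Bs w"
    and M: "matching (cut_edges E S) M"
  shows "card M \<le> card (Bs ! j)"
proof (rule card_matching_le_card_cover[OF M])
  show "finite (Bs ! j)"
    using path_decomposition_bag_subset[OF pd \<open>j < length Bs\<close>] graph_finite_vertices[OF g]
    by (rule finite_subset)
next
  fix e assume "e \<in> M"
  then obtain u w where e: "e = {u, w}" "e \<in> E" "u \<in> S" "w \<notin> S"
    using M unfolding matching_def cut_edges_def by blast
  then have "w \<in> V" using graph_edge_subset[OF g] by blast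
  then have "u \<in> Bs ! j"
    using e below above by (intro bag_contains_cut_endpoint[OF pd]) auto
  then show "e \<inter> Bs ! j \<noteq> {}" using e(1) by blast
qed

lemma ordering_by_first_bag_mw_le:
  assumes g: "graph V E" and pd: "path_decomposition V E Bs"
  shows "\<exists>vs. vertex_ordering V vs \<and> mw_of_ordering E vs \<le> Max (card ` set Bs)"
proof -
  let ?f = "first_bag Bs"
  obtain vs0 where "distinct vs0" "set vs0 = V"
    using finite_distinct_list[OF graph_finite_vertices[OF g]] by blast
  define vs where "vs = sort_key ?f vs0"
  have vs: "vertex_ordering V vs" "sorted (map ?f vs)"
    unfolding vs_def vertex_ordering_def using \<open>distinct vs0\<close> \<open>set vs0 = V\<close> by auto
  have "nu (cut_edges E (set (take i vs))) \<le> Max (card ` set Bs)" for i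
  proof (rule nu_le)
    show "finite (cut_edges E (set (take i vs)))"
      using graph_finite_edges[OF g] unfolding cut_edges_def by simp
  next
    fix M assume M: "matching (cut_edges E (set (take i vs))) M"
    let ?S = "set (take i vs)"
    have split: "\<forall>x\<in>?S. \<forall>w\<in>set (drop i vs). ?f x \<le> ?f w"
      using vs(2) sorted_append[of "map ?f (take i vs)" "map ?f (drop i vs)"]
      by (simp flip: map_append)
    \<comment> \<open>The \<open>0\<close> only matters for the empty prefix, whose cut has no edges.\<close>
    define j where "j = Max (insert 0 (?f ` ?S))"
    have "j \<in> insert 0 (?f ` ?S)" unfolding j_def by (intro Max_in) auto
    moreover have "V = ?S \<union> set (drop i vs)"
      using vs(1) unfolding vertex_ordering_def by (metis append_take_drop_id set_append)
    moreover have "0 < length Bs" using pd unfolding path_decomposition_def by simp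
    ultimately have "j < length Bs" "\<forall>w\<in>V - ?S. j \<le> ?f w"
      using split first_bag_less_length[OF pd] by auto
    moreover have "\<forall>u\<in>?S. ?f u \<le> j" unfolding j_def by simp
    ultimately have "card M \<le> card (Bs ! j)"
      using card_cut_matching_le_bag[OF g pd _ _ _ M] by blast
    also have "\<dots> \<le> Max (card ` set Bs)" using \<open>j < length Bs\<close> by simp
    finally show "card M \<le> Max (card ` set Bs)" .
  qed
  then show ?thesis using vs(1) mw_of_ordering_le by blast
qed

lemma pathwidth_attained:
  assumes "graph V E"
  shows "\<exists>Bs. path_decomposition V E Bs \<and> pd_width Bs = pathwidth V E"
proof -
  let ?P = "\<lambda>n. \<exists>Bs. path_decomposition V E Bs \<and> Max (card ` set Bs) = n"
  define n where "n = (LEAST n. ?P n)"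
  have "?P n"
    unfolding n_def by (rule LeastI) (use path_decomposition_single_bag[OF assms] in auto)
  then obtain Bs where Bs: "path_decomposition V E Bs" "pd_width Bs = int n - 1"
    unfolding pd_width_def by blast
  have "pathwidth V E = int n - 1"
    unfolding pathwidth_def
  proof (rule Least_equality)
    fix k assume "\<exists>Bs. path_decomposition V E Bs \<and> pd_width Bs = k"
    then obtain Bs' where "path_decomposition V E Bs'" "k = int (Max (card ` set Bs')) - 1"
      unfolding pd_width_def by blast
    moreover have "n \<le> Max (card ` set Bs')"
      unfolding n_def by (rule Least_le) (use \<open>path_decomposition V E Bs'\<close> in blast)
    ultimately show "int n - 1 \<le> k" by linarith
  qed (use Bs in blast)
  with Bs show ?thesis by auto
qed

theorem theorem6:
  fixes V :: "'a set" and E :: "'a set set"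
  assumes "graph V E"
  shows "int (matching_width V E) \<le> pathwidth V E + 1"
proof -
  obtain Bs where Bs: "path_decomposition V E Bs" "pd_width Bs = pathwidth V E"
    using pathwidth_attained[OF assms] by blast
  obtain vs where vs: "vertex_ordering V vs" "mw_of_ordering E vs \<le> Max (card ` set Bs)"
    using ordering_by_first_bag_mw_le[OF assms Bs(1)] by blast
  have "matching_width V E \<le> mw_of_ordering E vs"
    unfolding matching_width_def by (rule Least_le) (use vs(1) in blast)
  with vs(2) Bs(2) show ?thesis unfolding pd_width_def by simp
qed

end
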